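(* Let $p\in(1,2)$. There exists a constant $C_p>0$ such that for all real numbers $a,b$ and every $\mu\in(0,1)$ with $|a-b|\ge\mu\max(|a|,|b|)$, $G(a-b)\le\frac{C_p}{\mu^{2-p}}(a-b)\big(g(a)-g(b)\big).$
   Context: $g(y)=\operatorname{sgn}(y)[(|y|+1)^{p-1}-1]$ and $G(y)=\int_0^yg(s)\,ds=\frac1p[(|y|+1)^p-1]-|y|$. *)

theory Defs
  imports "HOL-Analysis.Analysis"
begin

definition gfun :: "real \<Rightarrow> real \<Rightarrow> real" where
  "gfun p y = sgn y * ((\<bar>y\<bar> + 1) powr (p - 1) - 1)"

definition Gfun :: "real \<Rightarrow> real \<Rightarrow> real" where
  "Gfun p y = (1 / p) * ((\<bar>y\<bar> + 1) powr p - 1) - \<bar>y\<bar>"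

end

theory Submission
  imports Defs
begin

text \<open>
  On each side of 0, g is the shifted power y \<mapsto> (y+1)^(p-1) - 1, whose derivative
  (p-1)(y+1)^(p-2) is decreasing. Hence on [b, a] it is at least (p-1)(M+1)^(p-2), with
  M = max |a| |b|, and (a-b)(g(a)-g(b)) \<ge> (p-1)(a-b)^2 (M+1)^(p-2). On the other side the
  mean value theorem gives G(y) \<le> y^2 (|y|+1)^(p-2). The hypothesis |a-b| \<ge> \<mu> M yields
  M + 1 \<le> (|a-b|+1)/\<mu>, so passing from (M+1)^(p-2) to (|a-b|+1)^(p-2) costs the factor
  \<mu>^(2-p); the constant is C = 1/(p-1).
\<close>

lemma powr_diff_ge_concave:
  fixes r s t :: real
  assumes "0 \<le> r" "r \<le> 1" "0 < s" "s \<le> t"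
  shows "r * (t - s) * t powr (r - 1) \<le> t powr r - s powr r"
proof (cases "s = t")
  case False
  have "\<And>x. s \<le> x \<Longrightarrow> x \<le> t \<Longrightarrow> DERIV (\<lambda>x. x powr r) x :> r * x powr (r - 1)"
    using assms by (intro has_real_derivative_powr) auto
  with MVT2[of s t] False assms obtain z where z: "s < z" "z < t"
    "t powr r - s powr r = (t - s) * (r * z powr (r - 1))"
    by force
  have "t powr (r - 1) \<le> z powr (r - 1)"
    by (rule powr_mono2') (use assms z in auto)
  then have "(t - s) * (r * t powr (r - 1)) \<le> (t - s) * (r * z powr (r - 1))"
    using assms by (intro mult_left_mono) auto
  then show ?thesis
    using z(3) by (simp add: algebra_simps)
qed simp

lemma powr_diff_le_convex:
  fixes r s t :: real
  assumes "1 \<le> r" "0 < s" "s \<le> t"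
  shows "t powr r - s powr r \<le> r * (t - s) * t powr (r - 1)"
proof (cases "s = t")
  case False
  have "\<And>x. s \<le> x \<Longrightarrow> x \<le> t \<Longrightarrow> DERIV (\<lambda>x. x powr r) x :> r * x powr (r - 1)"
    using assms by (intro has_real_derivative_powr) auto
  with MVT2[of s t] False assms obtain z where z: "s < z" "z < t"
    "t powr r - s powr r = (t - s) * (r * z powr (r - 1))"
    by force
  have "z powr (r - 1) \<le> t powr (r - 1)"
    by (rule powr_mono2) (use assms z in auto)
  then have "(t - s) * (r * z powr (r - 1)) \<le> (t - s) * (r * t powr (r - 1))"
    using assms by (intro mult_left_mono) auto
  then show ?thesis
    using z(3) by (simp add: algebra_simps)
qed simp

lemma gfun_nonneg_eq: "0 \<le> y \<Longrightarrow> gfun p y = (y + 1) powr (p - 1) - 1"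
  by (cases "y = 0") (auto simp: gfun_def)

lemma gfun_minus: "gfun p (- y) = - gfun p y"
  by (simp add: gfun_def)

lemma Gfun_minus: "Gfun p (- y) = Gfun p y"
  by (simp add: Gfun_def)

lemma gfun_diff_ge_nonneg:
  fixes p u v M :: real
  assumes "1 < p" "p < 2" "0 \<le> u" "u \<le> v" "v \<le> M"
  shows "(p - 1) * (v - u) * (M + 1) powr (p - 2) \<le> gfun p v - gfun p u"
proof -
  have "(M + 1) powr (p - 2) \<le> (v + 1) powr (p - 2)"
    by (rule powr_mono2') (use assms in auto)
  then have "(p - 1) * (v - u) * (M + 1) powr (p - 2) \<le> (p - 1) * (v - u) * (v + 1) powr (p - 2)"
    using assms by (intro mult_left_mono) auto
  also have "\<dots> \<le> (v + 1) powr (p - 1) - (u + 1) powr (p - 1)"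
    using powr_diff_ge_concave[of "p - 1" "u + 1" "v + 1"] assms by simp
  finally show ?thesis
    using assms by (simp add: gfun_nonneg_eq)
qed

lemma gfun_diff_ge:
  fixes p a b :: real
  assumes "1 < p" "p < 2" "b \<le> a"
  shows "(p - 1) * (a - b) * (max \<bar>a\<bar> \<bar>b\<bar> + 1) powr (p - 2) \<le> gfun p a - gfun p b"
proof -
  let ?M = "max \<bar>a\<bar> \<bar>b\<bar>"
  consider "0 \<le> b" | "a \<le> 0" | "b < 0" "0 < a" by linarith
  then show ?thesis
  proof cases
    case 1
    then show ?thesis using gfun_diff_ge_nonneg[of p b a ?M] assms by simp
  next
    case 2
    then show ?thesis
      using gfun_diff_ge_nonneg[of p "- a" "- b" ?M] assms by (simp add: gfun_minus)
  next
    case 3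
    have "(p - 1) * (a - 0) * (?M + 1) powr (p - 2) \<le> gfun p a - gfun p 0"
      using gfun_diff_ge_nonneg[of p 0 a ?M] assms 3 by simp
    moreover have "(p - 1) * (- b - 0) * (?M + 1) powr (p - 2) \<le> gfun p (- b) - gfun p 0"
      using gfun_diff_ge_nonneg[of p 0 "- b" ?M] assms 3 by simp
    moreover have "gfun p 0 = 0"
      by (simp add: gfun_def)
    ultimately show ?thesis
      by (simp add: gfun_minus algebra_simps)
  qed
qed

lemma mult_gfun_diff_ge:
  fixes p a b :: real
  assumes "1 < p" "p < 2"
  shows "(p - 1) * (a - b)\<^sup>2 * (max \<bar>a\<bar> \<bar>b\<bar> + 1) powr (p - 2)
           \<le> (a - b) * (gfun p a - gfun p b)"
proof -
  have ordered: "(p - 1) * (x - y)\<^sup>2 * (max \<bar>x\<bar> \<bar>y\<bar> + 1) powr (p - 2)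
                   \<le> (x - y) * (gfun p x - gfun p y)" if "y \<le> x" for x y :: real
    using mult_left_mono[OF gfun_diff_ge[OF assms that], of "x - y"] that
    by (simp add: power2_eq_square algebra_simps)
  show ?thesis
  proof (cases "b \<le> a")
    case False
    then show ?thesis
      using ordered[of a b] by (simp add: max.commute power2_commute algebra_simps)
  qed (rule ordered)
qed

lemma Gfun_le:
  fixes p y :: real
  assumes "1 < p" "p < 2"
  shows "Gfun p y \<le> y\<^sup>2 * (\<bar>y\<bar> + 1) powr (p - 2)"
proof -
  have nonneg: "Gfun p x \<le> x\<^sup>2 * (x + 1) powr (p - 2)" if "0 \<le> x" for x :: real
  proof -
    have "Gfun p x = (1 / p) * ((x + 1) powr p - 1 powr p) - x"
      using that by (simp add: Gfun_def)
    also have "\<dots> \<le> (1 / p) * (p * x * (x + 1) powr (p - 1)) - x"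
      using powr_diff_le_convex[of p 1 "x + 1"] assms that
      by (intro diff_right_mono mult_left_mono) auto
    also have "\<dots> = x * ((x + 1) * (x + 1) powr (p - 2) - 1)"
      using assms that powr_add[of "x + 1" 1 "p - 2"] by (simp add: algebra_simps)
    also have "\<dots> \<le> x * (x * (x + 1) powr (p - 2))"
      using powr_mono2'[of "p - 2" 1 "x + 1"] assms that
      by (intro mult_left_mono) (auto simp: algebra_simps)
    finally show ?thesis
      by (simp add: power2_eq_square)
  qed
  show ?thesis
    using nonneg[of "\<bar>y\<bar>"] by (simp add: Gfun_def)
qed

lemma powr_shift_scale_le:
  fixes \<mu> x M r :: real
  assumes "0 < \<mu>" "\<mu> \<le> 1" "0 \<le> M" "\<mu> * M \<le> x" "r \<le> 0"
  shows "(x + 1) powr r \<le> (M + 1) powr r / \<mu> powr (- r)"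
proof -
  have "M + 1 \<le> (x + 1) / \<mu>"
    using assms by (simp add: field_simps)
  then have "((x + 1) / \<mu>) powr r \<le> (M + 1) powr r"
    using assms by (intro powr_mono2') auto
  moreover have "((x + 1) / \<mu>) powr r = (x + 1) powr r * \<mu> powr (- r)"
    using assms by (simp add: powr_divide powr_minus_divide)
  ultimately show ?thesis
    using assms by (simp add: field_simps)
qed

theorem mainTheorem16:
  fixes p :: real
  assumes "1 < p" and "p < 2"
  shows "\<exists>C > 0. \<forall>a b \<mu> :: real. 0 < \<mu> \<longrightarrow> \<mu> < 1 \<longrightarrow>
           \<bar>a - b\<bar> \<ge> \<mu> * max \<bar>a\<bar> \<bar>b\<bar> \<longrightarrow>
           Gfun p (a - b) \<le> C / \<mu> powr (2 - p) * ((a - b) * (gfun p a - gfun p b))"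
proof (intro exI[of _ "1 / (p - 1)"] conjI allI impI)
  show "0 < 1 / (p - 1)" using assms by simp
  fix a b \<mu> :: real
  assume \<mu>: "0 < \<mu>" "\<mu> < 1" and sep: "\<bar>a - b\<bar> \<ge> \<mu> * max \<bar>a\<bar> \<bar>b\<bar>"
  let ?M = "max \<bar>a\<bar> \<bar>b\<bar>"
  have "Gfun p (a - b) \<le> (a - b)\<^sup>2 * (\<bar>a - b\<bar> + 1) powr (p - 2)"
    using Gfun_le[OF assms] by simp
  also have "\<dots> \<le> (a - b)\<^sup>2 * ((?M + 1) powr (p - 2) / \<mu> powr (2 - p))"
    using powr_shift_scale_le[of \<mu> ?M "\<bar>a - b\<bar>" "p - 2"] \<mu> sep assms
    by (intro mult_left_mono) auto
  also have "\<dots> = 1 / (p - 1) / \<mu> powr (2 - p) * ((p - 1) * (a - b)\<^sup>2 * (?M + 1) powr (p - 2))"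
    using assms by simp
  also have "\<dots> \<le> 1 / (p - 1) / \<mu> powr (2 - p) * ((a - b) * (gfun p a - gfun p b))"
    using mult_gfun_diff_ge[OF assms, of a b] assms \<mu> by (intro mult_left_mono) auto
  finally show "Gfun p (a - b) \<le> 1 / (p - 1) / \<mu> powr (2 - p) * ((a - b) * (gfun p a - gfun p b))" .
qed

end
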